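(* Let $\mathscr{A}=\{A_1,\ldots,A_r\}$ be an irreducible set of real $d\times d$ matrices, $\|\cdot\|$ a norm on $\mathbb{R}^d$, and $p\ge d-1$ an integer. Suppose that for some nonzero $x_*\in\mathbb{R}^d$, some word $F\in\mathscr{A}_\infty$ and some $\nu>0$ we have $\|Fx_*\|\ge \nu\|x_*\|$. Then for every nonzero $x\in\mathbb{R}^d$ there is a word $G\in\mathscr{A}_p$ such that $F_x=FG\in\mathscr{A}_\infty$ satisfies $\mathrm{len}(F)\le\mathrm{len}(F_x)\le\mathrm{len}(F)+p$ and \[ \|F_x x\|\ge \nu\,\chi_p(\mathscr{A})\,\|x\|. \]
   Context: Irreducible: the matrices in $\mathscr{A}$ have no common invariant subspace other than $\{0\}$ and $\mathbb{R}^d$. $\mathscr{A}^k$ is the set of products of $k$ matrices from $\mathscr{A}$, $\mathscr{A}^0=\{I\}$. $\mathscr{A}_\infty=\bigcup_{k\ge1}\mathscr{A}^k$; elements are regarded as products $A_{i_q}\cdots A_{i_1}$ of factors from $\mathscr{A}$, and the number $q$ of factors is the length $\mathrm{len}$ (the identity $I\in\mathscr{A}^0$ has length $0$). $\mathscr{A}_p=\bigcup_{k=0}^p\mathscr{A}^k$, $\mathscr{A}_p(x)=\{Ax: A\in\mathscr{A}_p\}$. $\mathbf{S}(t)$ is the closed ball of radius $t$ about $0$ in $\|\cdot\|$. The $p$-measure of irreducibility is $\chi_p(\mathscr{A})=\inf_{\|x\|=1}\sup\{t\ge0:\mathbf{S}(t)\subseteq\mathrm{conv}(\mathscr{A}_p(x)\cup\mathscr{A}_p(-x))\}$.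 *)

theory Defs
  imports "HOL-Analysis.Analysis"
begin

definition is_norm :: "(real^'n \<Rightarrow> real) \<Rightarrow> bool" where
  "is_norm N \<longleftrightarrow> (\<forall>x y. N (x + y) \<le> N x + N y) \<and> (\<forall>c x. N (c *\<^sub>R x) = \<bar>c\<bar> * N x)
     \<and> (\<forall>x. N x = 0 \<longleftrightarrow> x = 0)"

definition irreducible_set :: "(real^'n^'n) set \<Rightarrow> bool" where
  "irreducible_set \<A> \<longleftrightarrow> (\<forall>V. subspace V \<and> (\<forall>A\<in>\<A>. \<forall>v\<in>V. A *v v \<in> V) \<longrightarrow> V = {0} \<or> V = UNIV)"

text \<open>A word [A_iq, ..., A_i1] denotes the product A_iq ** ... ** A_i1; its length is the
  length of the list; the empty word is the identity.\<close>
definition word_prod :: "(real^'n^'n) list \<Rightarrow> real^'n^'n" where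
  "word_prod ws = foldr (**) ws (mat 1)"

definition orbit_p :: "(real^'n^'n) set \<Rightarrow> nat \<Rightarrow> real^'n \<Rightarrow> (real^'n) set" where
  "orbit_p \<A> p x = {word_prod ws *v x | ws. set ws \<subseteq> \<A> \<and> length ws \<le> p}"

definition Sball :: "(real^'n \<Rightarrow> real) \<Rightarrow> real \<Rightarrow> (real^'n) set" where
  "Sball N t = {y. N y \<le> t}"

definition chi_p :: "(real^'n \<Rightarrow> real) \<Rightarrow> (real^'n^'n) set \<Rightarrow> nat \<Rightarrow> real" where
  "chi_p N \<A> p = (INF x\<in>{x. N x = 1}.
      Sup {t. t \<ge> 0 \<and> Sball N t \<subseteq> convex hull (orbit_p \<A> p x \<union> orbit_p \<A> p (- x))})"

end

theory Submission
  imports Defs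
begin

text \<open>
  Write B for the matrix of the word F and fix a nonzero x; normalise it to
  y = x / N x.  For every admissible radius t of y (a t \<ge> 0 with S(t) inside the convex hull
  of A_p(y) \<union> A_p(-y)) pick u = (t / N xs) xs, a vector of norm t.  Since y \<mapsto> N (B y) is
  convex and even, the bound N (B u) \<le> max over words G \<in> A_p of N (B G y) follows from u
  lying in that convex hull.  On the other hand N (B u) \<ge> \<nu> t by the hypothesis on xs.
  Taking the supremum over t and using chi_p \<le> sup of the admissible radii of the unit
  vector y gives \<nu> chi_p \<le> N (B G y) for a maximising word G, and scaling back by N x
  gives the claim for F_x = F G.
\<close>

lemma is_norm_scale: "is_norm N \<Longrightarrow> N (c *\<^sub>R x) = \<bar>c\<bar> * N x"
  unfolding is_norm_def by blast

lemma is_norm_minus: "is_norm N \<Longrightarrow> N (- x) = N x"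
  using is_norm_scale[of N "-1" x] by simp

lemma is_norm_nonneg:
  assumes "is_norm N" shows "N x \<ge> 0"
proof -
  have "0 = N (x + (- x))" using assms unfolding is_norm_def by simp
  also have "\<dots> \<le> N x + N (- x)" using assms unfolding is_norm_def by blast
  finally show ?thesis using is_norm_minus[OF assms] by simp
qed

lemma is_norm_pos: "is_norm N \<Longrightarrow> x \<noteq> 0 \<Longrightarrow> N x > 0"
  using is_norm_nonneg[of N x] unfolding is_norm_def by (metis less_eq_real_def)

lemma is_norm_rescale:
  assumes "is_norm N" "v \<noteq> 0" "t \<ge> 0"
  shows "N ((t / N v) *\<^sub>R v) = t"
  using assms is_norm_pos[OF assms(1,2)] by (simp add: is_norm_scale)

lemma convex_norm_sublevel:
  assumes "is_norm N"
  shows "convex {u. N (B *v u) \<le> c}"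
  unfolding convex_def
proof clarify
  fix x y and a b :: real
  assume h: "N (B *v x) \<le> c" "N (B *v y) \<le> c" "0 \<le> a" "0 \<le> b" "a + b = 1"
  have "B *v (a *\<^sub>R x + b *\<^sub>R y) = a *\<^sub>R (B *v x) + b *\<^sub>R (B *v y)"
    by (simp add: matrix_vector_right_distrib matrix_vector_mult_scaleR)
  hence "N (B *v (a *\<^sub>R x + b *\<^sub>R y)) \<le> N (a *\<^sub>R (B *v x)) + N (b *\<^sub>R (B *v y))"
    using assms unfolding is_norm_def by metis
  also have "\<dots> = a * N (B *v x) + b * N (B *v y)"
    using h by (simp add: is_norm_scale[OF assms])
  also have "\<dots> \<le> a * c + b * c" using h by (intro add_mono mult_left_mono) auto
  also have "\<dots> = c" using h by (metis distrib_right mult_1)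
  finally show "N (B *v (a *\<^sub>R x + b *\<^sub>R y)) \<le> c" .
qed

definition words :: "(real^'n^'n) set \<Rightarrow> nat \<Rightarrow> (real^'n^'n) list set" where
  "words \<A> p = {ws. set ws \<subseteq> \<A> \<and> length ws \<le> p}"

lemma finite_words: "finite \<A> \<Longrightarrow> finite (words \<A> p)"
  unfolding words_def by (rule finite_lists_length_le)

lemma Nil_in_words: "[] \<in> words \<A> p"
  unfolding words_def by simp

lemma word_prod_append: "word_prod (F @ G) = word_prod F ** word_prod G"
  unfolding word_prod_def by (induction F) (auto simp: matrix_mul_assoc)

lemma orbit_p_self: "z \<in> orbit_p \<A> p z"
  unfolding orbit_p_def by (rule CollectI, rule exI[of _ "[]"]) (simp add: word_prod_def)

definition max_gain ::
    "(real^'n \<Rightarrow> real) \<Rightarrow> (real^'n^'n) set \<Rightarrow> nat \<Rightarrow> real^'n^'n \<Rightarrow> real^'n \<Rightarrow> real" where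
  "max_gain N \<A> p B z = Max ((\<lambda>G. N (B *v (word_prod G *v z))) ` words \<A> p)"

lemma max_gain_attained:
  assumes "finite \<A>"
  obtains G where "G \<in> words \<A> p" "N (B *v (word_prod G *v z)) = max_gain N \<A> p B z"
proof -
  have "max_gain N \<A> p B z \<in> (\<lambda>G. N (B *v (word_prod G *v z))) ` words \<A> p"
    unfolding max_gain_def using finite_words[OF assms] Nil_in_words by (intro Max_in) blast+
  thus ?thesis using that by auto
qed

text \<open>Since N \<circ> B is convex and even, its maximum over conv(\<A>_p(z) \<union> \<A>_p(-z)) is
  attained at a point B G z of the orbit of z itself.\<close>
lemma hull_orbit_bound:
  assumes "is_norm N" "finite \<A>"
    and "u \<in> convex hull (orbit_p \<A> p z \<union> orbit_p \<A> p (- z))"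
  shows "N (B *v u) \<le> max_gain N \<A> p B z"
proof -
  let ?M = "max_gain N \<A> p B z"
  have "N (B *v k) \<le> ?M" if k_orbit: "k \<in> orbit_p \<A> p z \<union> orbit_p \<A> p (- z)" for k
  proof -
    obtain G where G: "set G \<subseteq> \<A>" "length G \<le> p"
      and k: "k = word_prod G *v z \<or> k = word_prod G *v (- z)"
      using k_orbit unfolding orbit_p_def by auto
    have "B *v (word_prod G *v (- z)) = - (B *v (word_prod G *v z))"
      by (metis matrix_vector_mult_scaleR scaleR_minus1_left)
    hence "N (B *v k) = N (B *v (word_prod G *v z))"
      using k is_norm_minus[OF assms(1)] by auto
    also have "\<dots> \<le> ?M"
      unfolding max_gain_def using finite_words[OF assms(2)] G by (intro Max_ge) (auto simp: words_def)
    finally show ?thesis .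
  qed
  hence "convex hull (orbit_p \<A> p z \<union> orbit_p \<A> p (- z)) \<subseteq> {u. N (B *v u) \<le> ?M}"
    by (intro hull_minimal convex_norm_sublevel[OF assms(1)]) auto
  thus ?thesis using assms(3) by auto
qed

definition radii :: "(real^'n \<Rightarrow> real) \<Rightarrow> (real^'n^'n) set \<Rightarrow> nat \<Rightarrow> real^'n \<Rightarrow> real set" where
  "radii N \<A> p z = {t. t \<ge> 0 \<and> Sball N t \<subseteq> convex hull (orbit_p \<A> p z \<union> orbit_p \<A> p (- z))}"

lemma chi_p_def': "chi_p N \<A> p = (INF z\<in>{z. N z = 1}. Sup (radii N \<A> p z))"
  unfolding chi_p_def radii_def ..

lemma radius_bound:
  assumes "is_norm N" "finite \<A>" "t \<in> radii N \<A> p z" "N u = t"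
  shows "N (B *v u) \<le> max_gain N \<A> p B z"
  using assms by (intro hull_orbit_bound) (auto simp: radii_def Sball_def)

lemma zero_in_radii:
  assumes "is_norm N" shows "0 \<in> radii N \<A> p z"
proof -
  have "Sball N 0 = {0}"
    using is_norm_nonneg[OF assms] assms unfolding Sball_def is_norm_def
    by (auto, metis order.antisym, metis order.refl)
  moreover have "z \<in> convex hull (orbit_p \<A> p z \<union> orbit_p \<A> p (- z))"
    "- z \<in> convex hull (orbit_p \<A> p z \<union> orbit_p \<A> p (- z))"
    by (auto intro: hull_subset[THEN subsetD] orbit_p_self)
  hence "(1/2) *\<^sub>R z + (1/2) *\<^sub>R (- z) \<in> convex hull (orbit_p \<A> p z \<union> orbit_p \<A> p (- z))"
    by (intro convexD[OF convex_convex_hull]) auto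
  ultimately show ?thesis unfolding radii_def by simp
qed

lemma bdd_above_radii:
  fixes z :: "real^'n"
  assumes "is_norm N" "finite \<A>"
  shows "bdd_above (radii N \<A> p z)"
proof
  fix t assume t: "t \<in> radii N \<A> p z"
  let ?v = "axis undefined 1 :: real^'n"
  have "?v \<noteq> 0" by (simp add: axis_eq_0_iff)
  hence "N ((t / N ?v) *\<^sub>R ?v) = t"
    using t assms(1) by (intro is_norm_rescale) (auto simp: radii_def)
  moreover from this have "N (mat 1 *v ((t / N ?v) *\<^sub>R ?v)) \<le> max_gain N \<A> p (mat 1) z"
    by (rule radius_bound[OF assms t])
  ultimately show "t \<le> max_gain N \<A> p (mat 1) z" by simp
qed

lemma chi_p_le_Sup_radii:
  assumes "is_norm N" "finite \<A>" "N y = 1"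
  shows "chi_p N \<A> p \<le> Sup (radii N \<A> p y)"
proof -
  have "Sup (radii N \<A> p z) \<ge> 0" for z
    using zero_in_radii[OF assms(1)] bdd_above_radii[OF assms(1,2)] by (rule cSup_upper)
  thus ?thesis
    unfolding chi_p_def' using assms(3) by (intro cINF_lower bdd_belowI2[where m=0]) auto
qed

lemma expansion_bound:
  assumes "is_norm N" "finite \<A>" "v \<noteq> 0" "\<nu> > 0" "N (B *v v) \<ge> \<nu> * N v"
  shows "\<nu> * Sup (radii N \<A> p z) \<le> max_gain N \<A> p B z"
proof -
  let ?M = "max_gain N \<A> p B z"
  have Nv: "N v > 0" using is_norm_pos[OF assms(1,3)] .
  have "\<nu> * t \<le> ?M" if t: "t \<in> radii N \<A> p z" for t
  proof -
    have t0: "t \<ge> 0" using t by (simp add: radii_def)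
    have "\<nu> * t = (t / N v) * (\<nu> * N v)" using Nv by simp
    also have "\<dots> \<le> (t / N v) * N (B *v v)"
      using t0 Nv assms(5) by (intro mult_left_mono) auto
    also have "\<dots> = N (B *v ((t / N v) *\<^sub>R v))"
      using t0 Nv by (simp add: is_norm_scale[OF assms(1)] matrix_vector_mult_scaleR)
    also have "\<dots> \<le> ?M"
      using radius_bound[OF assms(1,2) t] is_norm_rescale[OF assms(1,3) t0] by blast
    finally show ?thesis .
  qed
  hence "Sup (radii N \<A> p z) \<le> ?M / \<nu>"
    using zero_in_radii[OF assms(1), of \<A> p z] assms(4)
    by (intro cSup_least) (auto simp: field_simps)
  thus ?thesis using assms(4) by (simp add: field_simps)
qed

theorem lemma2:
  fixes \<A> :: "(real^'n^'n) set" and N :: "real^'n \<Rightarrow> real" and p :: nat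
    and xs :: "real^'n" and F :: "(real^'n^'n) list" and \<nu> :: real
  assumes "finite \<A>" and "irreducible_set \<A>" and "is_norm N"
    and "p \<ge> CARD('n) - 1"
    and "xs \<noteq> 0" and "set F \<subseteq> \<A>" and "length F \<ge> 1" and "\<nu> > 0"
    and "N (word_prod F *v xs) \<ge> \<nu> * N xs"
  shows "\<forall>x. x \<noteq> 0 \<longrightarrow> (\<exists>G. set G \<subseteq> \<A> \<and> length G \<le> p \<and>
           length F \<le> length (F @ G) \<and> length (F @ G) \<le> length F + p \<and>
           N (word_prod (F @ G) *v x) \<ge> \<nu> * chi_p N \<A> p * N x)"
proof (intro allI impI)
  fix x :: "real^'n" assume "x \<noteq> 0"
  define y where "y = (1 / N x) *\<^sub>R x"
  have Nx: "N x > 0" using is_norm_pos[OF assms(3) \<open>x \<noteq> 0\<close>] .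
  have Ny: "N y = 1" using Nx by (simp add: y_def is_norm_scale[OF assms(3)])
  obtain G where G: "G \<in> words \<A> p"
    and gain: "N (word_prod F *v (word_prod G *v y)) = max_gain N \<A> p (word_prod F) y"
    using max_gain_attained[OF assms(1)] .
  have "\<nu> * chi_p N \<A> p \<le> \<nu> * Sup (radii N \<A> p y)"
    using chi_p_le_Sup_radii[OF assms(3,1) Ny] assms(8) by simp
  also have "\<dots> \<le> N (word_prod F *v (word_prod G *v y))"
    using expansion_bound[OF assms(3,1,5,8,9)] gain by simp
  finally have "\<nu> * chi_p N \<A> p * N x \<le> N x * N (word_prod F *v (word_prod G *v y))"
    using Nx by (simp add: mult.commute mult_left_mono)
  also have "\<dots> = N (word_prod (F @ G) *v x)"
    using Nx by (simp add: y_def word_prod_append matrix_vector_mul_assoc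
        matrix_vector_mult_scaleR is_norm_scale[OF assms(3)])
  finally show "\<exists>G. set G \<subseteq> \<A> \<and> length G \<le> p \<and>
           length F \<le> length (F @ G) \<and> length (F @ G) \<le> length F + p \<and>
           N (word_prod (F @ G) *v x) \<ge> \<nu> * chi_p N \<A> p * N x"
    using G by (auto simp: words_def)
qed

end
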